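(* The set $\mathcal{PES}(\mathbb C)$ of perfectly everywhere surjective functions $\mathbb C\to\mathbb C$ is strongly $2^{\mathfrak{c}}$-algebrable in the algebra $\mathbb C^{\mathbb C}$.
   Context: $\mathfrak{c}$ denotes the cardinality of $\mathbb R$. A perfect subset of $\mathbb C$ is a nonempty closed set with no isolated points. A function $f:\mathbb C\to\mathbb C$ is perfectly everywhere surjective if $f(P)=\mathbb C$ for every perfect subset $P\subset\mathbb C$. $\mathbb C^{\mathbb C}$ is the commutative algebra of all functions $\mathbb C\to\mathbb C$ with pointwise operations. A subset $E$ of a commutative algebra $B$ is strongly $\kappa$-algebrable if there exists a set $X=\{x_\alpha:\alpha<\kappa\}\subset B$ of distinct elements such that the set of all monomials $x_{\alpha_1}^{k_1}\cdots x_{\alpha_n}^{k_n}$ ($n\ge1$, distinct $\alpha_i$, $k_i\ge1$) is linearly independent and every nontrivial linear combination of such monomials belongs to $E$ (i.e. $X$ freely generates an algebra contained in $E\cup\{0\}$). *)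

theory Defs
  imports "HOL-Analysis.Analysis"
begin

definition perfect_subset :: "complex set \<Rightarrow> bool" where
  "perfect_subset P \<longleftrightarrow> P \<noteq> {} \<and> closed P \<and> (\<forall>x\<in>P. x islimpt P)"

definition PES :: "(complex \<Rightarrow> complex) set" where
  "PES = {f. \<forall>P. perfect_subset P \<longrightarrow> f ` P = UNIV}"

text \<open>Exponent vectors of monomials: finitely supported, not identically zero
  (so a monomial is x_{a1}^{k1} ... x_{an}^{kn} with n >= 1, distinct a_i, k_i >= 1).\<close>
definition monomial_exps :: "('i \<Rightarrow> nat) set" where
  "monomial_exps = {e. finite {i. e i \<noteq> 0} \<and> (\<exists>i. e i \<noteq> 0)}"

definition monomial_fun :: "('i \<Rightarrow> complex \<Rightarrow> complex) \<Rightarrow> ('i \<Rightarrow> nat) \<Rightarrow> complex \<Rightarrow> complex" where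
  "monomial_fun x e = (\<lambda>z. \<Prod>i\<in>{i. e i \<noteq> 0}. x i z ^ e i)"

text \<open>Strong kappa-algebrability of E in C^C, with kappa given as the cardinality of
  the index set I: distinct generators x_i (i in I) whose monomials are linearly
  independent and all of whose nontrivial linear combinations of monomials lie in E.\<close>
definition strongly_algebrable_on :: "'i set \<Rightarrow> (complex \<Rightarrow> complex) set \<Rightarrow> bool" where
  "strongly_algebrable_on I E \<longleftrightarrow>
     (\<exists>x :: 'i \<Rightarrow> complex \<Rightarrow> complex.
        inj_on x I \<and>
        (\<forall>M c. finite M \<longrightarrow> M \<subseteq> monomial_exps \<longrightarrow> (\<forall>e\<in>M. {i. e i \<noteq> 0} \<subseteq> I) \<longrightarrow>
               (\<exists>e\<in>M. c e \<noteq> (0::complex)) \<longrightarrow>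
               (let f = (\<lambda>z. \<Sum>e\<in>M. c e * monomial_fun x e z)
                in f \<noteq> (\<lambda>z. 0) \<and> f \<in> E)))"

end

theory Submission
  imports Defs "HOL-Library.Equipollence" "HOL-Computational_Algebra.Fundamental_Theorem_Algebra"
begin

(* Build D : C -> C list * C * nat taking every value on every perfect set; this is a transfinite
   choice of length continuum, since there are continuum many perfect sets and each has
   cardinality continuum. For A a set of complex numbers let x_A z = s ^ B ^ c, where D z = (ps, s, B)
   and c is the binary number recording which points of ps lie in A. For a nontrivial combination of
   monomials in finitely many x_A, choose ps separating the sets involved and B above all exponents:
   by uniqueness of base-B digits the monomials become pairwise distinct positive powers of s, so the
   combination is a nonconstant polynomial in s and attains every value by the fundamental theorem of
   algebra. Hence it maps every perfect set onto C, so it is nonzero, which also forces the x_A to be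
   pairwise distinct. *)

unbundle cardinal_syntax

lemma nat_set_sequences_lepoll_nat_sets:
  "(UNIV :: (nat \<Rightarrow> nat set) set) \<lesssim> (UNIV :: nat set set)"
proof -
  have "inj (\<lambda>F. prod_encode ` Sigma UNIV F)"
  proof (rule injI)
    fix F G :: "nat \<Rightarrow> nat set"
    assume "prod_encode ` Sigma UNIV F = prod_encode ` Sigma UNIV G"
    then have "Sigma UNIV F = Sigma UNIV G"
      by (simp add: inj_image_eq_iff inj_prod_encode)
    then show "F = G"
      by (auto simp: set_eq_iff)
  qed
  then show ?thesis
    unfolding lepoll_def by blast
qed

lemma complex_lepoll_nat_sets: "(UNIV :: complex set) \<lesssim> (UNIV :: nat set set)"
proof -
  obtain h :: "real \<Rightarrow> nat set" where h: "inj h"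
    using nat_sets_eqpoll_reals eqpoll_sym eqpoll_imp_lepoll unfolding lepoll_def by blast
  have "inj (\<lambda>z (j::nat). h (if j = 0 then Re z else Im z))"
  proof (rule injI)
    fix z w :: complex
    assume "(\<lambda>j::nat. h (if j = 0 then Re z else Im z)) = (\<lambda>j. h (if j = 0 then Re w else Im w))"
    from fun_cong[OF this, of 0] fun_cong[OF this, of 1] h show "z = w"
      by (simp add: inj_eq complex_eq_iff)
  qed
  then have "(UNIV :: complex set) \<lesssim> (UNIV :: (nat \<Rightarrow> nat set) set)"
    unfolding lepoll_def by blast
  also note nat_set_sequences_lepoll_nat_sets
  finally show ?thesis .
qed

lemma nat_sets_lepoll_complex: "(UNIV :: nat set set) \<lesssim> (UNIV :: complex set)"
proof -
  have "(UNIV :: nat set set) \<lesssim> (UNIV :: real set)"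
    by (rule eqpoll_imp_lepoll[OF nat_sets_eqpoll_reals])
  also have "(UNIV :: real set) \<lesssim> (UNIV :: complex set)"
    unfolding lepoll_def using inj_of_real by blast
  finally show ?thesis .
qed

lemma nat_lepoll_complex: "(UNIV :: nat set) \<lesssim> (UNIV :: complex set)"
  unfolding lepoll_def using inj_of_nat by blast

lemma complex_sequences_lepoll_complex:
  "(UNIV :: (nat \<Rightarrow> complex) set) \<lesssim> (UNIV :: complex set)"
proof -
  obtain h :: "complex \<Rightarrow> nat set" where h: "inj h"
    using complex_lepoll_nat_sets unfolding lepoll_def by blast
  have "inj (\<lambda>f. h \<circ> f)"
    by (rule injI) (use h in \<open>auto simp: fun_eq_iff inj_eq\<close>)
  then have "(UNIV :: (nat \<Rightarrow> complex) set) \<lesssim> (UNIV :: (nat \<Rightarrow> nat set) set)"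
    unfolding lepoll_def by blast
  also note nat_set_sequences_lepoll_nat_sets
  also note nat_sets_lepoll_complex
  finally show ?thesis .
qed

lemma times_lepoll_complex:
  assumes "A \<lesssim> (UNIV :: complex set)" and "B \<lesssim> (UNIV :: complex set)"
  shows "A \<times> B \<lesssim> (UNIV :: complex set)"
proof -
  obtain f g :: "_ \<Rightarrow> complex" where f: "inj_on f A" and g: "inj_on g B"
    using assms unfolding lepoll_def by blast
  have "inj_on (\<lambda>p (n::nat). if n = 0 then f (fst p) else g (snd p)) (A \<times> B)"
  proof (rule inj_onI)
    fix p q
    assume pq: "p \<in> A \<times> B" "q \<in> A \<times> B"
      and eq: "(\<lambda>n::nat. if n = 0 then f (fst p) else g (snd p)) = (\<lambda>n. if n = 0 then f (fst q) else g (snd q))"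
    from fun_cong[OF eq, of 0] fun_cong[OF eq, of 1]
    have "f (fst p) = f (fst q)" "g (snd p) = g (snd q)"
      by simp_all
    with pq f g show "p = q"
      by (auto simp: inj_on_eq_iff prod_eq_iff)
  qed
  then have "A \<times> B \<lesssim> (UNIV :: (nat \<Rightarrow> complex) set)"
    unfolding lepoll_def by blast
  also note complex_sequences_lepoll_complex
  finally show ?thesis .
qed

lemma complex_lists_lepoll_complex: "(UNIV :: complex list set) \<lesssim> (UNIV :: complex set)"
proof -
  have "inj (\<lambda>xs n. if n = 0 then of_nat (length xs) else xs ! (n - 1) :: complex)"
  proof (rule injI)
    fix xs ys :: "complex list"
    assume eq: "(\<lambda>n. if n = 0 then of_nat (length xs) else xs ! (n - 1) :: complex)
      = (\<lambda>n. if n = 0 then of_nat (length ys) else ys ! (n - 1))"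
    from fun_cong[OF eq, of 0] have "length xs = length ys"
      by simp
    moreover have "xs ! i = ys ! i" for i
      using fun_cong[OF eq, of "Suc i"] by simp
    ultimately show "xs = ys"
      by (simp add: list_eq_iff_nth_eq)
  qed
  then have "(UNIV :: complex list set) \<lesssim> (UNIV :: (nat \<Rightarrow> complex) set)"
    unfolding lepoll_def by blast
  also note complex_sequences_lepoll_complex
  finally show ?thesis .
qed

lemma closed_sets_lepoll_nat_sets:
  "{S :: 'a::euclidean_space set. closed S} \<lesssim> (UNIV :: nat set set)"
proof -
  obtain B :: "nat \<Rightarrow> 'a set"
    where "inj B" "\<And>n. open (B n)" and B: "\<And>S. open S \<Longrightarrow> \<exists>k. S = \<Union>{B n |n. n \<in> k}"
    by (rule univ_second_countable_sequence, blast)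
  have complement: "- S = (\<Union>n\<in>{n. B n \<inter> S = {}}. B n)" if closed: "closed S" for S
  proof
    obtain k where k: "- S = (\<Union>n\<in>k. B n)"
      using B[OF open_Compl[OF closed]] by (auto simp: Setcompr_eq_image)
    then have "k \<subseteq> {n. B n \<inter> S = {}}"
      by blast
    with k show "- S \<subseteq> (\<Union>n\<in>{n. B n \<inter> S = {}}. B n)"
      by blast
  qed blast
  have "inj_on (\<lambda>S. {n. B n \<inter> S = {}}) {S. closed S}"
  proof (rule inj_onI)
    fix S T :: "'a set"
    assume "S \<in> {S. closed S}" "T \<in> {S. closed S}" "{n. B n \<inter> S = {}} = {n. B n \<inter> T = {}}"
    then have "- S = - T"
      using complement by simp
    then show "S = T"
      by simp
  qed
  then show ?thesis
    unfolding lepoll_def by blast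
qed

lemma complex_lepoll_perfect_subset:
  assumes "perfect_subset P"
  shows "(UNIV :: complex set) \<lesssim> P"
proof -
  have "euclidean derived_set_of P = {x. x islimpt P}"
    by (auto simp: derived_set_of_def islimpt_def)
  also have "\<dots> = P"
    using assms closed_limpt unfolding perfect_subset_def by blast
  finally have "euclidean derived_set_of P = P" .
  then have "(UNIV :: real set) \<lesssim> P"
    using assms completely_metrizable_space_euclidean
    by (intro lepoll_perfect_set) (auto simp: perfect_subset_def)
  with complex_lepoll_nat_sets nat_sets_eqpoll_reals show ?thesis
    by (meson lepoll_trans lepoll_trans2)
qed

lemma inj_choice_from_large_sets:
  assumes large: "\<And>i. i \<in> I \<Longrightarrow> I \<lesssim> T i"
  shows "\<exists>g. inj_on g I \<and> (\<forall>i\<in>I. g i \<in> T i)"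
proof -
  define r where "r = |I|"
  have Card_r: "Card_order r"
    unfolding r_def by (rule card_of_Card_order)
  have Field_r: "Field r = I"
    unfolding r_def by (rule Field_card_of)
  have Well_r: "Well_order r"
    unfolding r_def by (rule card_of_Well_order)
  have wf: "wf (r - Id)"
    using Well_r wo_rel.WF wo_rel_def by blast
  define g where
    "g = wfrec (r - Id) (\<lambda>g i. SOME t. t \<in> T i \<and> t \<notin> g ` underS r i)"
  have g_eq: "g i = (SOME t. t \<in> T i \<and> t \<notin> g ` underS r i)" for i
  proof -
    have "cut g (r - Id) i ` underS r i = g ` underS r i"
      unfolding cut_def underS_def by auto
    then show ?thesis
      unfolding g_def by (subst wfrec[OF wf]) simp
  qed
  \<comment> \<open>Fewer than \<open>|I|\<close> values are used before stage \<open>i\<close>, while \<open>T i\<close> has at least \<open>|I|\<close>.\<close>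
  have fresh: "\<exists>t. t \<in> T i \<and> t \<notin> g ` underS r i" if "i \<in> I" for i
  proof (rule ccontr)
    assume "\<not> ?thesis"
    then have "T i \<subseteq> g ` underS r i"
      by blast
    then have "|T i| \<le>o |g ` underS r i|"
      by (rule card_of_mono1)
    also have "|g ` underS r i| \<le>o |underS r i|"
      by (rule card_of_image)
    also have "|underS r i| <o r"
      using card_of_underS[OF Card_r] Field_r that by simp
    finally have "|T i| <o |I|"
      unfolding r_def .
    moreover have "|I| \<le>o |T i|"
      using large[OF that] unfolding lepoll_def card_of_ordLeq .
    ultimately show False
      using not_ordLess_ordLeq by blast
  qed
  have g: "g i \<in> T i" "g i \<notin> g ` underS r i" if "i \<in> I" for i
    using someI_ex[OF fresh[OF that]] g_eq[of i] by simp_all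
  have "inj_on g I"
  proof (rule inj_onI, rule ccontr)
    fix i j
    assume ij: "i \<in> I" "j \<in> I" "g i = g j" "i \<noteq> j"
    have "(i, j) \<in> r \<or> (j, i) \<in> r"
      using Well_r Field_r ij(1,2) unfolding wo_rel_def[symmetric] by (simp add: wo_rel.TOTALS)
    then have "i \<in> underS r j \<or> j \<in> underS r i"
      using ij(4) by (auto simp: underS_def)
    then show False
      using g ij by (metis imageI)
  qed
  then show ?thesis
    using g by blast
qed

lemma exists_onto_every_perfect_subset:
  assumes "(UNIV :: 'd set) \<lesssim> (UNIV :: complex set)"
  shows "\<exists>D :: complex \<Rightarrow> 'd. \<forall>P d. perfect_subset P \<longrightarrow> (\<exists>z\<in>P. D z = d)"
proof -
  define I where "I = {P. perfect_subset P} \<times> (UNIV :: 'd set)"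
  have "{P. perfect_subset P} \<lesssim> (UNIV :: complex set)"
  proof -
    have "{P. perfect_subset P} \<lesssim> {P :: complex set. closed P}"
      by (rule subset_imp_lepoll) (auto simp: perfect_subset_def)
    also note closed_sets_lepoll_nat_sets
    also note nat_sets_lepoll_complex
    finally show ?thesis .
  qed
  then have "I \<lesssim> (UNIV :: complex set)"
    unfolding I_def using assms by (rule times_lepoll_complex)
  then have "I \<lesssim> fst i" if "i \<in> I" for i
  proof -
    have "(UNIV :: complex set) \<lesssim> fst i"
      using that complex_lepoll_perfect_subset unfolding I_def by auto
    with \<open>I \<lesssim> UNIV\<close> show ?thesis
      by (rule lepoll_trans)
  qed
  then obtain g where g: "inj_on g I" "\<And>i. i \<in> I \<Longrightarrow> g i \<in> fst i"
    using inj_choice_from_large_sets[of I fst] by blast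
  have "g (P, d) \<in> P \<and> snd (inv_into I g (g (P, d))) = d" if "perfect_subset P" for P d
  proof -
    have "(P, d) \<in> I"
      using that by (simp add: I_def)
    then show ?thesis
      using g(1) g(2)[of "(P, d)"] by simp
  qed
  then show ?thesis
    by (intro exI[of _ "\<lambda>z. snd (inv_into I g z)"]) blast
qed

lemma horner_sum_of_bool_2_inj:
  assumes "length bs = length cs"
    and "horner_sum of_bool 2 bs = (horner_sum of_bool 2 cs :: nat)"
  shows "bs = cs"
proof (rule nth_equalityI)
  show "length bs = length cs"
    by (fact assms(1))
  show "bs ! i = cs ! i" if "i < length bs" for i
    using arg_cong[OF assms(2), of "\<lambda>x. bit x i"] that assms(1)
    by (simp add: bit_horner_sum_bit_iff)
qed

definition trace_code :: "'a list \<Rightarrow> 'a set \<Rightarrow> nat" where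
  "trace_code ps A = horner_sum of_bool 2 (map (\<lambda>p. p \<in> A) ps)"

lemma trace_code_separates:
  fixes S :: "'a set set"
  assumes "finite S"
  shows "\<exists>ps. inj_on (trace_code ps) S"
proof -
  define pick where "pick A A' = (SOME p. (p \<in> A) \<noteq> (p \<in> A'))" for A A' :: "'a set"
  have pick: "(pick A A' \<in> A) \<noteq> (pick A A' \<in> A')" if "A \<noteq> A'" for A A'
    unfolding pick_def by (rule someI_ex) (use that in blast)
  have "finite (case_prod pick ` (S \<times> S))"
    using assms by simp
  then obtain ps where ps: "set ps = case_prod pick ` (S \<times> S)"
    using finite_list by blast
  have "A = A'" if "A \<in> S" "A' \<in> S" "trace_code ps A = trace_code ps A'" for A A'
  proof (rule ccontr)
    assume "A \<noteq> A'"
    have "map (\<lambda>p. p \<in> A) ps = map (\<lambda>p. p \<in> A') ps"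
      by (rule horner_sum_of_bool_2_inj) (use that(3) in \<open>simp_all add: trace_code_def\<close>)
    moreover have "pick A A' \<in> set ps"
      using that(1,2) ps by auto
    ultimately show False
      using pick[OF \<open>A \<noteq> A'\<close>] by (simp add: map_eq_conv)
  qed
  then show ?thesis
    by (auto intro: inj_onI)
qed

lemma digit_expansion_unique:
  fixes B :: nat
  assumes "\<forall>k<N. a k < B" "\<forall>k<N. b k < B"
    and "(\<Sum>k<N. a k * B ^ k) = (\<Sum>k<N. b k * B ^ k)"
  shows "\<forall>k<N. a k = b k"
  using assms
proof (induction N arbitrary: a b)
  case 0
  then show ?case
    by simp
next
  case (Suc N)
  have split: "(\<Sum>k<Suc N. a k * B ^ k) = a 0 + B * (\<Sum>k<N. a (Suc k) * B ^ k)" for a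
    by (subst sum.lessThan_Suc_shift) (simp add: sum_distrib_left mult_ac)
  have digits0: "a 0 < B" "b 0 < B"
    using Suc.prems by auto
  have eq: "a 0 + B * (\<Sum>k<N. a (Suc k) * B ^ k) = b 0 + B * (\<Sum>k<N. b (Suc k) * B ^ k)"
    using Suc.prems(3) split[of a] split[of b] by simp
  have "a 0 = (a 0 + B * (\<Sum>k<N. a (Suc k) * B ^ k)) mod B"
    using digits0 by simp
  also have "\<dots> = b 0"
    using eq digits0 by simp
  finally have "a 0 = b 0" .
  moreover have "\<forall>k<N. a (Suc k) = b (Suc k)"
    using eq digits0 \<open>a 0 = b 0\<close> Suc.prems
    by (intro Suc.IH[of "\<lambda>k. a (Suc k)" "\<lambda>k. b (Suc k)"]) auto
  ultimately show ?case
    by (metis less_Suc_eq_0_disj)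
qed

lemma digit_expansion_unique_on:
  fixes B :: nat and pos :: "'a \<Rightarrow> nat"
  assumes "finite S" and pos: "inj_on pos S"
    and digits: "\<forall>A\<in>S. a A < B" "\<forall>A\<in>S. b A < B"
    and eq: "(\<Sum>A\<in>S. a A * B ^ pos A) = (\<Sum>A\<in>S. b A * B ^ pos A)"
  shows "\<forall>A\<in>S. a A = b A"
proof (cases "S = {}")
  case False
  then have "0 < B"
    using digits(1) by auto
  define N where "N = Suc (Max (insert 0 (pos ` S)))"
  have pos_less: "pos A < N" if "A \<in> S" for A
    unfolding N_def using \<open>finite S\<close> that by (simp add: le_imp_less_Suc)
  define digit where "digit a k = (if k \<in> pos ` S then a (inv_into S pos k) else 0)"
    for a :: "'a \<Rightarrow> nat" and k
  have expansion: "(\<Sum>A\<in>S. a A * B ^ pos A) = (\<Sum>k<N. digit a k * B ^ k)" for a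
  proof -
    have "(\<Sum>A\<in>S. a A * B ^ pos A) = (\<Sum>k\<in>pos ` S. digit a k * B ^ k)"
      by (subst sum.reindex[OF pos]) (simp add: digit_def pos)
    also have "\<dots> = (\<Sum>k<N. digit a k * B ^ k)"
      by (rule sum.mono_neutral_left) (auto simp: digit_def pos_less)
    finally show ?thesis .
  qed
  have "\<forall>k<N. digit a k = digit b k"
    by (rule digit_expansion_unique) (use digits eq expansion \<open>0 < B\<close> in \<open>auto simp: digit_def inv_into_into\<close>)
  then show ?thesis
    using pos pos_less by (metis digit_def image_eqI inv_into_f_f)
qed simp

definition exponent_code :: "'a list \<Rightarrow> nat \<Rightarrow> ('a set \<Rightarrow> nat) \<Rightarrow> nat" where
  "exponent_code ps B e = (\<Sum>A | e A \<noteq> 0. e A * B ^ trace_code ps A)"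

lemma exponent_code_pos:
  assumes "e \<in> monomial_exps" and "0 < B"
  shows "0 < exponent_code ps B e"
  using assms unfolding exponent_code_def monomial_exps_def by (auto intro!: sum_pos)

lemma exponent_code_inj:
  assumes "finite M" and "M \<subseteq> monomial_exps"
  shows "\<exists>ps B. 0 < B \<and> inj_on (exponent_code ps B) M"
proof -
  define S where "S = (\<Union>e\<in>M. {A. e A \<noteq> 0})"
  have "finite S"
    using assms unfolding S_def monomial_exps_def by auto
  then obtain ps where ps: "inj_on (trace_code ps) S"
    using trace_code_separates[OF \<open>finite S\<close>] by blast
  define B where "B = Suc (Max (insert 0 (\<Union>e\<in>M. e ` S)))"
  have digits: "e A < B" if "e \<in> M" for e A
  proof (cases "A \<in> S")
    case True
    then show ?thesis
      unfolding B_def using \<open>finite S\<close> assms(1) that by (intro le_imp_less_Suc Max_ge) auto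
  next
    case False
    then show ?thesis
      using that unfolding S_def B_def by auto
  qed
  have on_S: "exponent_code ps B e = (\<Sum>A\<in>S. e A * B ^ trace_code ps A)" if "e \<in> M" for e
    unfolding exponent_code_def
    by (rule sum.mono_neutral_left) (use \<open>finite S\<close> that in \<open>auto simp: S_def\<close>)
  have "inj_on (exponent_code ps B) M"
  proof (rule inj_onI)
    fix e e' assume ee': "e \<in> M" "e' \<in> M" "exponent_code ps B e = exponent_code ps B e'"
    then have "(\<Sum>A\<in>S. e A * B ^ trace_code ps A) = (\<Sum>A\<in>S. e' A * B ^ trace_code ps A)"
      using on_S by simp
    then have on: "\<forall>A\<in>S. e A = e' A"
      by (rule digit_expansion_unique_on[OF \<open>finite S\<close> ps, rotated 2]) (use digits ee' in auto)
    show "e = e'"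
    proof
      fix A
      show "e A = e' A"
      proof (cases "A \<in> S")
        case False
        then have "e A = 0" "e' A = 0"
          using ee'(1,2) by (auto simp: S_def)
        then show ?thesis
          by simp
      qed (use on in blast)
    qed
  qed
  then show ?thesis
    unfolding B_def by blast
qed

lemma sum_distinct_powers_surj:
  fixes c :: "'e \<Rightarrow> complex" and K :: "'e \<Rightarrow> nat"
  assumes "finite M" and K: "inj_on K M"
    and e0: "e0 \<in> M" "c e0 \<noteq> 0" "0 < K e0"
  shows "\<exists>s. (\<Sum>e\<in>M. c e * s ^ K e) = w"
proof -
  define p where "p = (\<Sum>e\<in>M. monom (c e) (K e)) - [:w:]"
  have "coeff p (K e0) = (\<Sum>e\<in>M. if K e = K e0 then c e else 0)"
    using e0(3) by (simp add: p_def coeff_sum coeff_monom coeff_pCons split: nat.split)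
  also have "\<dots> = (\<Sum>e\<in>M. if e = e0 then c e else 0)"
    by (rule sum.cong) (use K e0(1) in \<open>auto simp: inj_on_eq_iff\<close>)
  also have "\<dots> = c e0"
    using assms(1) e0(1) by simp
  finally have "K e0 \<le> degree p"
    using e0(2) by (auto intro: le_degree)
  then have "\<not> constant (poly p)"
    using e0(3) by (simp add: constant_degree)
  then obtain s where "poly p s = 0"
    using fundamental_theorem_of_algebra by blast
  then show ?thesis
    by (auto simp: p_def poly_sum poly_monom)
qed

definition power_generator ::
    "(complex \<Rightarrow> complex list \<times> complex \<times> nat) \<Rightarrow> complex set \<Rightarrow> complex \<Rightarrow> complex" where
  "power_generator D A z = (case D z of (ps, s, B) \<Rightarrow> s ^ B ^ trace_code ps A)"

lemma monomial_fun_power_generator: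
  assumes "D z = (ps, s, B)"
  shows "monomial_fun (power_generator D) e z = s ^ exponent_code ps B e"
proof -
  have "monomial_fun (power_generator D) e z = (\<Prod>A | e A \<noteq> 0. s ^ (e A * B ^ trace_code ps A))"
    using assms by (simp add: monomial_fun_def power_generator_def power_mult[symmetric] mult.commute)
  also have "\<dots> = s ^ exponent_code ps B e"
    by (simp add: exponent_code_def power_sum)
  finally show ?thesis .
qed

lemma power_generator_combination_in_PES:
  assumes D: "\<And>P d. perfect_subset P \<Longrightarrow> \<exists>z\<in>P. D z = d"
    and M: "finite M" "M \<subseteq> monomial_exps" and e0: "e0 \<in> M" "c e0 \<noteq> 0"
  shows "(\<lambda>z. \<Sum>e\<in>M. c e * monomial_fun (power_generator D) e z) \<in> PES"
    (is "?f \<in> PES")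
proof -
  obtain ps B where "0 < B" and inj: "inj_on (exponent_code ps B) M"
    using exponent_code_inj[OF M] by blast
  have "0 < exponent_code ps B e0"
    using e0(1) M(2) \<open>0 < B\<close> by (intro exponent_code_pos) auto
  have "w \<in> ?f ` P" if P: "perfect_subset P" for P w
  proof -
    obtain s where s: "(\<Sum>e\<in>M. c e * s ^ exponent_code ps B e) = w"
      using sum_distinct_powers_surj[of M "exponent_code ps B" e0 c w] M(1) inj e0
        \<open>0 < exponent_code ps B e0\<close> by blast
    obtain z where "z \<in> P" and z: "D z = (ps, s, B)"
      using D[OF P] by blast
    have "?f z = w"
      using s by (simp add: monomial_fun_power_generator[of D, OF z])
    with \<open>z \<in> P\<close> show ?thesis
      by blast
  qed
  then have "?f ` P = UNIV" if "perfect_subset P" for P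
    using that by blast
  then show ?thesis
    unfolding PES_def by blast
qed

lemma perfect_subset_UNIV: "perfect_subset (UNIV :: complex set)"
  unfolding perfect_subset_def by (simp add: islimpt_UNIV)

lemma PES_nonzero:
  assumes "f \<in> PES"
  shows "f \<noteq> (\<lambda>z. 0)"
proof
  assume "f = (\<lambda>z. 0)"
  have "f ` UNIV = UNIV"
    using assms perfect_subset_UNIV unfolding PES_def by blast
  then have "1 \<in> f ` UNIV"
    by simp
  with \<open>f = (\<lambda>z. 0)\<close> show False
    by auto
qed

lemma inj_on_if_monomials_independent:
  assumes indep: "\<And>M c. finite M \<Longrightarrow> M \<subseteq> monomial_exps \<Longrightarrow> (\<forall>e\<in>M. {i. e i \<noteq> 0} \<subseteq> I) \<Longrightarrow>
      (\<exists>e\<in>M. c e \<noteq> 0) \<Longrightarrow> (\<lambda>z. \<Sum>e\<in>M. c e * monomial_fun x e z) \<noteq> (\<lambda>z. 0)"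
  shows "inj_on x I"
proof (rule inj_onI, rule ccontr)
  fix i j assume ij: "i \<in> I" "j \<in> I" "x i = x j" "i \<noteq> j"
  define ei ej :: "'a \<Rightarrow> nat" where "ei = (\<lambda>k. if k = i then 1 else 0)" and "ej = (\<lambda>k. if k = j then 1 else 0)"
  have supp: "{k. ei k \<noteq> 0} = {i}" "{k. ej k \<noteq> 0} = {j}"
    by (auto simp: ei_def ej_def)
  then have "ei \<noteq> ej"
    using ij(4) by auto
  have "monomial_fun x ei = x i" "monomial_fun x ej = x j"
    by (simp_all add: monomial_fun_def supp) (simp_all add: ei_def ej_def)
  then have "(\<lambda>z. \<Sum>e\<in>{ei, ej}. (if e = ei then 1 else - 1) * monomial_fun x e z) = (\<lambda>z. 0)"
    using \<open>ei \<noteq> ej\<close> ij(3) by simp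
  moreover have "{ei, ej} \<subseteq> monomial_exps"
    by (auto simp: monomial_exps_def ei_def ej_def)
  ultimately show False
    using indep[of "{ei, ej}" "\<lambda>e. if e = ei then 1 else - 1"] supp ij(1,2) by auto
qed

theorem theorem3p5:
  shows "strongly_algebrable_on (UNIV :: complex set set) PES"
proof -
  have "(UNIV :: (complex list \<times> complex \<times> nat) set) \<lesssim> (UNIV :: complex set)"
    using times_lepoll_complex complex_lists_lepoll_complex nat_lepoll_complex
    by (metis UNIV_Times_UNIV lepoll_refl)
  then obtain D :: "complex \<Rightarrow> complex list \<times> complex \<times> nat"
    where D: "\<And>P d. perfect_subset P \<Longrightarrow> \<exists>z\<in>P. D z = d"
    using exists_onto_every_perfect_subset by blast
  have combination: "(\<lambda>z. \<Sum>e\<in>M. c e * monomial_fun (power_generator D) e z) \<in> PES"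
    if "finite M" "M \<subseteq> monomial_exps" "\<exists>e\<in>M. c e \<noteq> 0" for M c
    using that power_generator_combination_in_PES[OF D] by blast
  then have "inj_on (power_generator D) UNIV"
    by (intro inj_on_if_monomials_independent) (simp add: PES_nonzero)
  with combination PES_nonzero show ?thesis
    unfolding strongly_algebrable_on_def Let_def by blast
qed

end
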